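(* Let $K$ be the irreducible cyclic code of length $n$ over $GF(q)$ with monic irreducible parity-check polynomial of degree $m>1$ and order $n\ne q^m-1$, and let $d=\gcd(q-1,n)$, $r=n/d$, $R=(q^m-1)/(q-1)$, $b=(q-1)/d$, and $s$ the number of cycles of nonzero codewords of $K$. If $s=b$, then $K$ is equidistant, i.e. all nonzero codewords of $K$ have the same Hamming weight. Moreover, the conditions $s=b$, $r=R$, and $\gcd(s,R)=1$ are equivalent.
   Context: Let $q>2$ be a prime power. $A_n=GF(q)[x]/(x^n-1)$; Hamming weight of an element = number of nonzero coefficients of its representative of degree $<n$. The order of $h$ is the least $e\ge1$ with $h\mid x^e-1$. $K$ is the ideal of $A_n$ generated by $(x^n-1)/h(x)$. The cycle of nonzero $z$ is $\{x^iz:i\ge0\}$. *)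

theory Defs
  imports "HOL-Computational_Algebra.Polynomial" "HOL-Computational_Algebra.Polynomial_Factorial"
begin

definition xn1 :: "nat \<Rightarrow> 'a::comm_ring_1 poly" where
  "xn1 n = monom 1 n - 1"

definition poly_ord :: "'a::field poly \<Rightarrow> nat" where
  "poly_ord h = (LEAST e. e \<ge> 1 \<and> h dvd xn1 e)"

text \<open>The ideal K of A_n generated by (x^n-1)/h, elements represented
  by their canonical representatives of degree < n.\<close>
definition cyc_code :: "nat \<Rightarrow> 'a::field poly \<Rightarrow> 'a poly set" where
  "cyc_code n h = {(f * (xn1 n div h)) mod xn1 n | f. True}"

definition hweight :: "'a::zero poly \<Rightarrow> nat" where
  "hweight p = card {i. coeff p i \<noteq> 0}"

definition cyc :: "nat \<Rightarrow> 'a::field poly \<Rightarrow> 'a poly set" where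
  "cyc n z = {(monom 1 i * z) mod xn1 n | i. True}"

definition num_cycles :: "nat \<Rightarrow> 'a::field poly \<Rightarrow> nat" where
  "num_cycles n h = card {cyc n z | z. z \<in> cyc_code n h \<and> z \<noteq> 0}"

end

theory Submission
  imports Defs "HOL-Number_Theory.Cong"
begin

text \<open>
  Let \<open>h\<close> be irreducible over \<open>GF(q)\<close> of degree \<open>m > 1\<close> and order \<open>n\<close>, and let \<open>K\<close> be the
  cyclic code of length \<open>n\<close> generated by \<open>g = (x^n - 1)/h\<close>.  The encoding \<open>f \<mapsto> f g\<close>
  identifies \<open>GF(q)[x]/(h)\<close> with \<open>K\<close>, and multiplication by \<open>x\<close> (the cyclic shift) becomes
  multiplication by \<open>x\<close>, which has order exactly \<open>n\<close> modulo \<open>h\<close>.  Two consequences: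

  \<^item> every nonzero codeword lies on a cycle of length \<open>n\<close>, and these cycles partition the
    \<open>q^m - 1\<close> nonzero codewords, so \<open>n s = q^m - 1 = R (q - 1)\<close>; the equivalences
    \<open>s = b \<longleftrightarrow> r = R \<longleftrightarrow> gcd s R = 1\<close> are then elementary arithmetic;
  \<^item> the weight of the codeword of \<open>f\<close> is the number of \<open>j \<in> {1..n}\<close> with \<open>L(x^j f) \<noteq> 0\<close>,
    \<open>L\<close> the constant-coefficient functional.  The map \<open>(c, j) \<mapsto> c x^j f mod h\<close> from
    \<open>GF(q)^* \<times> {1..n}\<close> to the nonzero residues has fibers of size at most \<open>d\<close>; when
    \<open>s = b\<close> the counts \<open>(q - 1) n = d (q^m - 1)\<close> force all fibers to have size exactly \<open>d\<close>,
    whence \<open>(q - 1) wt = d \<cdot> #{u. L u \<noteq> 0}\<close> is the same for every nonzero codeword.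
\<close>

lemma power_card_minus_one:
  fixes c :: "'a::{field,finite}"
  assumes "c \<noteq> 0"
  shows "c ^ (card (UNIV::'a set) - 1) = 1"
proof -
  let ?U = "UNIV - {0::'a}"
  have "(\<Prod>y\<in>?U. c * y) = (\<Prod>y\<in>?U. y)"
    by (rule prod.reindex_bij_witness[of _ "\<lambda>y. y / c" "\<lambda>y. c * y"]) (use assms in auto)
  moreover have "(\<Prod>y\<in>?U. c * y) = c ^ (card (UNIV::'a set) - 1) * (\<Prod>y\<in>?U. y)"
    by (simp add: prod.distrib card_Diff_singleton)
  moreover have "(\<Prod>y\<in>?U. y) \<noteq> 0" by simp
  ultimately show ?thesis by simp
qed

lemma degree_Poly_less: "xs \<noteq> [] \<Longrightarrow> degree (Poly xs) < length xs"
proof -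
  assume "xs \<noteq> []"
  moreover have "degree (Poly xs) \<le> length xs - 1"
    by (rule degree_le) (auto simp: nth_default_def)
  ultimately show ?thesis by (cases xs) auto
qed

lemma bij_betw_coeff_list:
  assumes "m \<ge> 1"
  shows "bij_betw (\<lambda>p. map (coeff p) [0..<m]) {p :: 'a::zero poly. degree p < m} {xs :: 'a list. length xs = m}"
proof (rule bij_betw_byWitness[where f' = Poly])
  show "\<forall>p\<in>{p. degree p < m}. Poly (map (coeff p) [0..<m]) = p"
    by (auto intro!: poly_eqI simp: nth_default_def coeff_eq_0)
  show "\<forall>xs\<in>{xs. length xs = m}. map (coeff (Poly xs)) [0..<m] = xs"
    by (auto intro!: nth_equalityI simp: nth_default_def)
  show "Poly ` {xs :: 'a list. length xs = m} \<subseteq> {p. degree p < m}"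
  proof (rule image_subsetI)
    fix xs assume "xs \<in> {xs :: 'a list. length xs = m}"
    hence "xs \<noteq> []" "length xs = m" using assms by auto
    thus "Poly xs \<in> {p. degree p < m}" using degree_Poly_less by auto
  qed
qed auto

lemma card_degree_less:
  assumes "m \<ge> 1"
  shows "card {p :: 'a::{zero,finite} poly. degree p < m} = card (UNIV::'a set) ^ m"
  using bij_betw_same_card[OF bij_betw_coeff_list[where 'a='a, OF assms]] card_lists_length_eq[of "UNIV::'a set" m]
  by simp

lemma finite_degree_less: "finite {p :: 'a::{zero,finite} poly. degree p < m}"
proof (cases "m \<ge> 1")
  case True
  show ?thesis using bij_betw_finite[OF bij_betw_coeff_list[where 'a='a, OF True]] finite_lists_length_eq[of "UNIV::'a set" m]
    by simp
qed simp

lemma card_eq_sum_fibers: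
  assumes "finite P" "f ` P \<subseteq> N" "finite N"
  shows "card P = (\<Sum>u\<in>N. card {p \<in> P. f p = u})"
proof -
  have "P = (\<Union>u\<in>N. {p \<in> P. f p = u})" using assms(2) by auto
  hence "card P = card (\<Union>u\<in>N. {p \<in> P. f p = u})" by simp
  also have "\<dots> = (\<Sum>u\<in>N. card {p \<in> P. f p = u})"
    by (rule card_UN_disjoint) (use assms in auto)
  finally show ?thesis .
qed

lemma fibers_full:
  assumes "finite P" "f ` P \<subseteq> N" "finite N"
    and le: "\<And>u. u \<in> N \<Longrightarrow> card {p \<in> P. f p = u} \<le> d"
    and total: "card P = d * card N"
    and u: "u \<in> N"
  shows "card {p \<in> P. f p = u} = d"
proof -
  have "(\<Sum>u\<in>N. card {p \<in> P. f p = u}) = (\<Sum>u\<in>N. d)"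
    using card_eq_sum_fibers[OF assms(1-3)] total by (simp add: mult.commute)
  from sum_mono_inv[OF this le u assms(3)] show ?thesis .
qed

lemma card_preimage_full_fibers:
  assumes "finite P" "finite S" and full: "\<And>u. u \<in> S \<Longrightarrow> card {p \<in> P. f p = u} = d"
  shows "card {p \<in> P. f p \<in> S} = d * card S"
proof -
  have "card {p \<in> P. f p \<in> S} = (\<Sum>u\<in>S. card {p \<in> {p \<in> P. f p \<in> S}. f p = u})"
    by (rule card_eq_sum_fibers) (use assms in auto)
  also have "\<dots> = (\<Sum>u\<in>S. d)"
  proof (rule sum.cong)
    fix u assume "u \<in> S"
    hence "{p \<in> {p \<in> P. f p \<in> S}. f p = u} = {p \<in> P. f p = u}" by auto
    thus "card {p \<in> {p \<in> P. f p \<in> S}. f p = u} = d" using full \<open>u \<in> S\<close> by simp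
  qed simp
  finally show ?thesis by simp
qed

lemma card_congruent_le:
  fixes A :: "nat set"
  assumes A: "A \<subseteq> {a..<a + t * d}" and cong: "\<And>i j. i \<in> A \<Longrightarrow> j \<in> A \<Longrightarrow> [i = j] (mod t)"
  shows "card A \<le> d"
proof -
  let ?block = "\<lambda>j. (j - a) div t"
  have "inj_on ?block A"
  proof (rule inj_onI)
    fix i j assume ij: "i \<in> A" "j \<in> A" "?block i = ?block j"
    have a: "a \<le> i" "a \<le> j" using ij(1,2) A by auto
    hence "[i - a = j - a] (mod t)"
      using cong_diff_nat[OF cong[OF ij(1,2)] cong_refl] by blast
    hence "(i - a) mod t = (j - a) mod t" by (simp add: cong_def)
    hence "i - a = j - a" using ij(3) by (metis div_mult_mod_eq)
    thus "i = j" using a by simp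
  qed
  moreover have "?block j < d" if "j \<in> A" for j
  proof -
    have "j \<in> {a..<a + t * d}" using that A by blast
    hence "j - a < d * t" by (simp add: mult.commute less_diff_conv2)
    thus ?thesis by (rule less_mult_imp_div_less)
  qed
  hence "?block ` A \<subseteq> {..<d}" by auto
  ultimately show ?thesis using card_inj_on_le[of ?block A "{..<d}"] by simp
qed

lemma cong_cancel_gcd:
  fixes i j k n :: nat
  assumes "[i * k = j * k] (mod n)" "n > 0"
  shows "[i = j] (mod n div gcd k n)"
proof -
  define g t b where "g = gcd k n" and "t = n div g" and "b = k div g"
  have g: "g > 0" using assms(2) by (simp add: g_def)
  have n: "n = t * g" and k: "k = b * g" by (simp_all add: g_def t_def b_def)
  have "coprime b t" unfolding b_def t_def g_def using div_gcd_coprime assms(2) by blast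
  have "(i * b) mod t * g = (j * b) mod t * g"
    using assms(1) unfolding cong_def n k by (simp flip: mod_mult_mult2 mult.assoc)
  hence "[i * b = j * b] (mod t)" using g by (simp add: cong_def)
  thus ?thesis using \<open>coprime b t\<close> cong_mult_rcancel_nat by (simp add: t_def g_def)
qed

text \<open>\<open>q - 1\<close> divides \<open>q^m - 1\<close>, so \<open>R = (q^m - 1)/(q - 1)\<close> is exact.\<close>
lemma pred_dvd_power_pred: "(q::nat) \<ge> 1 \<Longrightarrow> q - 1 dvd q ^ m - 1"
proof -
  assume q: "q \<ge> 1"
  have "[q = 1] (mod q - 1)" using q by (simp add: cong_altdef_nat)
  hence "[q ^ m = 1] (mod q - 1)" using cong_pow by fastforce
  thus ?thesis using q by (simp add: cong_altdef_nat)
qed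

text \<open>The arithmetic core: from \<open>n s = R k\<close>, with \<open>d = gcd(k, n)\<close>, \<open>r = n/d\<close>, \<open>b = k/d\<close>,
  we get \<open>r | R\<close> (as \<open>r\<close> and \<open>b\<close> are coprime), say \<open>R = r t\<close> and \<open>s = t b\<close>; all three conditions
  say \<open>t = 1\<close>.\<close>
lemma cycle_count_arith:
  fixes n s k R :: nat
  assumes ns: "n * s = R * k" and n: "n > 0" and k: "k > 0"
  shows "(s = k div gcd k n \<longleftrightarrow> n div gcd k n = R) \<and> (n div gcd k n = R \<longleftrightarrow> gcd s R = 1)"
proof -
  define d r b where "d = gcd k n" and "r = n div d" and "b = k div d"
  have d: "d > 0" using n by (simp add: d_def)
  have nr: "n = d * r" and kb: "k = d * b" by (simp_all add: d_def r_def b_def)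
  have "coprime r b" unfolding r_def b_def d_def using div_gcd_coprime[of n k] n by (simp add: gcd.commute)
  have rs: "r * s = R * b" using ns d unfolding nr kb by (simp add: ac_simps)
  have r: "r > 0" and b: "b > 0" using n k nr kb by auto
  have "r dvd R * b" using rs by (metis dvd_triv_left)
  then obtain t where Rt: "R = r * t"
    using \<open>coprime r b\<close> by (auto simp: coprime_dvd_mult_left_iff elim: dvdE)
  have st: "s = t * b" using rs Rt r by (simp add: ac_simps)
  have "s = b \<longleftrightarrow> r = R" using rs r b Rt st by auto
  moreover have "r = R \<longleftrightarrow> gcd s R = 1"
  proof
    assume "r = R"
    hence "s = b" using rs r by simp
    thus "gcd s R = 1"
      using \<open>r = R\<close> \<open>coprime r b\<close> by (simp add: coprime_commute coprime_iff_gcd_eq_1)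
  next
    assume "gcd s R = 1"
    moreover have "t dvd gcd s R" using st Rt by simp
    ultimately show "r = R" using Rt by simp
  qed
  ultimately show ?thesis unfolding r_def b_def d_def by blast
qed

lemma coeff_xn1: "coeff (xn1 n) k = (if k = n then 1 else 0) - (if k = 0 then 1 else 0)"
  unfolding xn1_def by (simp add: coeff_monom)

lemma degree_xn1: "n \<ge> 1 \<Longrightarrow> degree (xn1 n :: 'a::field poly) = n"
  by (intro antisym degree_le le_degree) (auto simp: coeff_xn1)

lemma xn1_nonzero: "n \<ge> 1 \<Longrightarrow> (xn1 n :: 'a::field poly) \<noteq> 0"
  using degree_xn1[of n, where 'a='a] by auto

lemma degree_mod_xn1:
  assumes "n \<ge> 1"
  shows "degree (p mod xn1 n :: 'a::field poly) < n"
  using degree_mod_less[OF xn1_nonzero[OF assms], of p] degree_xn1[OF assms, where 'a='a] assms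
  by auto

lemma coeff_rotate:
  fixes p :: "'a::field poly"
  assumes n: "n \<ge> 1" and p: "degree p < n" and j: "j < n"
  shows "coeff ((monom 1 1 * p) mod xn1 n) (Suc j mod n) = coeff p j"
proof -
  define c where "c = coeff p (n - 1)"
  define r where "r = monom 1 1 * p - smult c (xn1 n)"
  have coeff_r: "coeff r k = (if k = 0 then c else coeff p (k - 1)) - (if k = n then c else 0)" for k
    using n by (auto simp: r_def coeff_monom_mult coeff_xn1 c_def)
  have "degree r < n"
  proof -
    have "coeff r k = 0" if "k > n - 1" for k
      using p that n by (cases "k = n") (auto simp: coeff_r c_def coeff_eq_0)
    hence "degree r \<le> n - 1" by (rule degree_le[rule_format])
    thus ?thesis using n by simp
  qed
  hence "r mod xn1 n = r" using degree_xn1[OF n, where 'a='a] by (simp add: mod_poly_less)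
  moreover have "(monom 1 1 * p) mod xn1 n = r mod xn1 n"
    unfolding r_def by (simp add: mod_eq_dvd_iff dvd_smult)
  ultimately have "(monom 1 1 * p) mod xn1 n = r" by simp
  thus ?thesis using j n by (cases "Suc j = n") (auto simp: coeff_r c_def)
qed

lemma coeff_rotate_monom:
  fixes p :: "'a::field poly"
  assumes n: "n \<ge> 1" and p: "degree p < n" and i: "i < n"
  shows "coeff ((monom 1 k * p) mod xn1 n) ((i + k) mod n) = coeff p i"
proof (induction k)
  case 0 thus ?case using i p degree_xn1[OF n, where 'a='a] by (simp add: mod_poly_less)
next
  case (Suc k)
  let ?p = "(monom 1 k * p) mod xn1 n"
  have "(monom 1 (Suc k) * p) mod xn1 n = (monom 1 1 * ?p) mod xn1 n"
    by (simp add: mod_mult_right_eq mult_monom flip: mult.assoc)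
  moreover have "(i + Suc k) mod n = Suc ((i + k) mod n) mod n"
    by (simp add: mod_Suc_eq)
  ultimately show ?case
    using coeff_rotate[OF n degree_mod_xn1[OF n], of "(i + k) mod n" "monom 1 k * p"] n Suc
    by simp
qed

locale irreducible_of_order =
  fixes h :: "'a::{field,finite} poly" and n :: nat
  assumes irreducible: "irreducible h"
    and degree_gt_1: "degree h > 1"
    and n_eq: "n = poly_ord h"
begin

lemma prime: "prime_elem h"
  using irreducible by (rule field_poly_irreducible_imp_prime)

lemma h_nonzero: "h \<noteq> 0"
  using degree_gt_1 by auto

lemma not_dvd_mult: "\<not> h dvd a \<Longrightarrow> \<not> h dvd b \<Longrightarrow> \<not> h dvd a * b"
  using prime_elem_dvd_mult_iff[OF prime] by blast

text \<open>\<open>h\<close> is prime to \<open>x\<close>, since it is irreducible of degree \<open>> 1\<close>.\<close>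
lemma not_dvd_monom: "\<not> h dvd monom 1 k"
proof
  assume "h dvd monom 1 k"
  hence "h dvd [:0, 1:] ^ k" by (simp add: monom_altdef)
  hence "h dvd [:0, 1:]" using prime prime_elem_dvd_power by blast
  hence "degree h \<le> 1" using dvd_imp_degree_le[of h "[:0, 1:]"] by simp
  thus False using degree_gt_1 by simp
qed

lemma mult_mod_cancel:
  assumes "\<not> h dvd f"
  shows "(a * f) mod h = (b * f) mod h \<longleftrightarrow> a mod h = b mod h"
proof -
  have "(a * f) mod h = (b * f) mod h \<longleftrightarrow> h dvd (a - b) * f"
    by (simp add: mod_eq_dvd_iff algebra_simps)
  also have "\<dots> \<longleftrightarrow> h dvd a - b"
    using assms prime_elem_dvd_mult_iff[OF prime] by blast
  finally show ?thesis by (simp add: mod_eq_dvd_iff)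
qed

lemma monom_mod_eq_1_iff_dvd_xn1: "monom 1 e mod h = 1 mod h \<longleftrightarrow> h dvd xn1 e"
  by (simp add: xn1_def mod_eq_dvd_iff)

text \<open>The powers of \<open>x\<close> modulo \<open>h\<close> repeat, since there are only finitely many
  residues; hence \<open>h\<close> divides some \<open>x^e - 1\<close> and its order is well defined.\<close>
lemma order_exists: "\<exists>e. e \<ge> 1 \<and> h dvd xn1 e"
proof -
  let ?res = "\<lambda>k. monom (1::'a) k mod h"
  have "degree (?res k) < degree h" for k
    using degree_mod_less[OF h_nonzero, of "monom 1 k"] degree_gt_1 by auto
  hence "range ?res \<subseteq> {p. degree p < degree h}" by auto
  hence "finite (range ?res)"
    using finite_degree_less finite_subset by blast
  hence "\<not> inj ?res"
    using finite_imageD infinite_UNIV_nat by blast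
  hence "\<exists>i j. i < j \<and> ?res i = ?res j"
    unfolding inj_def by (metis linorder_neqE_nat)
  then obtain i j where ij: "i < j" "?res i = ?res j" by blast
  have "(1 * monom 1 i) mod h = (monom 1 (j - i) * monom 1 i) mod h"
    using ij by (simp add: mult_monom)
  hence "1 mod h = monom 1 (j - i) mod h"
    by (simp only: mult_mod_cancel[OF not_dvd_monom])
  hence "h dvd xn1 (j - i)"
    by (simp only: eq_commute[of "1 mod h"] monom_mod_eq_1_iff_dvd_xn1)
  thus ?thesis using ij by (intro exI[of _ "j - i"]) auto
qed

lemma n_pos: "n \<ge> 1" and dvd_xn1: "h dvd xn1 n"
  using LeastI_ex[OF order_exists] unfolding n_eq poly_ord_def by auto

lemma order_minimal: "1 \<le> e \<Longrightarrow> e < n \<Longrightarrow> \<not> h dvd xn1 e"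
  unfolding n_eq poly_ord_def using not_less_Least by blast

lemma monom_mod_eq_1_iff: "monom 1 e mod h = 1 mod h \<longleftrightarrow> n dvd e"
proof -
  have xn: "monom 1 n mod h = 1 mod h"
    using dvd_xn1 monom_mod_eq_1_iff_dvd_xn1 by blast
  have "monom 1 (n * k) mod h = 1 mod h" for k
  proof -
    have "monom 1 (n * k) mod h = (monom 1 n mod h) ^ k mod h"
      by (simp add: monom_power power_mod flip: mult.commute)
    thus ?thesis by (simp add: xn power_mod)
  qed
  moreover have "monom (1::'a) e = monom 1 (n * (e div n)) * monom 1 (e mod n)"
    by (simp add: mult_monom)
  ultimately have "monom 1 e mod h = monom 1 (e mod n) mod h"
    by (metis mod_mult_left_eq mult_1)
  also have "\<dots> = 1 mod h \<longleftrightarrow> e mod n = 0"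
    using order_minimal[of "e mod n"] n_pos monom_mod_eq_1_iff_dvd_xn1
    by (cases "e mod n = 0") auto
  finally show ?thesis by auto
qed

lemma shift_mod_eq_iff:
  assumes "\<not> h dvd f"
  shows "(monom 1 i * f) mod h = (monom 1 j * f) mod h \<longleftrightarrow> [i = j] (mod n)"
proof -
  have le: "(monom 1 i * f) mod h = (monom 1 j * f) mod h \<longleftrightarrow> [j = i] (mod n)"
    if "i \<le> j" for i j
  proof -
    have split: "monom (1::'a) j * f = monom 1 (j - i) * (monom 1 i * f)"
      using that by (simp add: mult_monom flip: mult.assoc)
    have "(monom 1 i * f) mod h = (monom 1 j * f) mod h
        \<longleftrightarrow> (1 * (monom 1 i * f)) mod h = (monom 1 (j - i) * (monom 1 i * f)) mod h"
      by (simp only: split mult_1)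
    also have "\<dots> \<longleftrightarrow> 1 mod h = monom 1 (j - i) mod h"
      by (rule mult_mod_cancel[OF not_dvd_mult[OF not_dvd_monom assms]])
    also have "\<dots> \<longleftrightarrow> [j = i] (mod n)"
      using that by (simp add: eq_commute[of "1 mod h"] monom_mod_eq_1_iff cong_altdef_nat)
    finally show ?thesis .
  qed
  show ?thesis
    using le[of i j] le[of j i] by (cases "i \<le> j") (auto simp: cong_sym_eq)
qed

lemma shift_mod_cong:
  assumes "[i = j] (mod n)"
  shows "(monom 1 i * f) mod h = (monom 1 j * f) mod h"
proof -
  have "\<not> h dvd 1" using prime prime_elem_not_unit by blast
  hence "monom 1 i mod h = monom 1 j mod h"
    using shift_mod_eq_iff[of 1 i j] assms by simp
  thus ?thesis by (metis mod_mult_left_eq)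
qed

definition codeword :: "'a poly \<Rightarrow> 'a poly" where
  "codeword f = (f * (xn1 n div h)) mod xn1 n"

lemma cyc_code_eq: "cyc_code n h = range codeword"
  unfolding cyc_code_def codeword_def by auto

text \<open>Since \<open>x^n - 1 = h g\<close>, two messages have the same codeword iff they agree mod \<open>h\<close>;
  in particular the codeword vanishes iff \<open>h\<close> divides the message.\<close>
lemma codeword_eq_iff: "codeword a = codeword b \<longleftrightarrow> a mod h = b mod h"
proof -
  let ?g = "xn1 n div h"
  have hg: "xn1 n = h * ?g" using dvd_xn1 by simp
  have "?g \<noteq> 0" using hg xn1_nonzero[OF n_pos] by auto
  hence "h * ?g dvd (a - b) * ?g \<longleftrightarrow> h dvd a - b" by simp
  thus ?thesis
    unfolding codeword_def by (simp add: mod_eq_dvd_iff algebra_simps flip: hg)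
qed

lemma codeword_eq_0_iff: "codeword a = 0 \<longleftrightarrow> h dvd a"
  using codeword_eq_iff[of a 0] by (simp add: codeword_def dvd_eq_mod_eq_0)

lemma codeword_mod: "codeword (f mod h) = codeword f"
  by (simp add: codeword_eq_iff)

lemma codeword_shift: "(monom 1 i * codeword f) mod xn1 n = codeword (monom 1 i * f)"
  unfolding codeword_def by (simp add: mod_mult_right_eq mult.assoc)

lemma codeword_smult: "codeword (smult c f) = smult c (codeword f)"
  unfolding codeword_def by (simp add: mod_smult_left)

lemma degree_codeword: "degree (codeword f) < n"
  unfolding codeword_def by (rule degree_mod_xn1[OF n_pos])

lemma codeword_shift_cong:
  "[i = j] (mod n) \<Longrightarrow> codeword (monom 1 i * f) = codeword (monom 1 j * f)"
  using shift_mod_cong codeword_eq_iff by blast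

text \<open>The constant coefficient of the codeword: a linear functional on messages.
  By cyclic rotation, every coefficient of a codeword is a value of it.\<close>
definition coord0 :: "'a poly \<Rightarrow> 'a" where
  "coord0 f = coeff (codeword f) 0"

lemma coord0_mod: "coord0 (f mod h) = coord0 f"
  unfolding coord0_def by (simp add: codeword_mod)

lemma coord0_smult: "coord0 (smult c f) = c * coord0 f"
  unfolding coord0_def by (simp add: codeword_smult)

lemma coeff_codeword: "i < n \<Longrightarrow> coeff (codeword f) i = coord0 (monom 1 (n - i) * f)"
  using coeff_rotate_monom[OF n_pos _ , of "codeword f" i "n - i"]
  unfolding coord0_def codeword_def
  by (simp add: degree_codeword[unfolded codeword_def] codeword_shift[unfolded codeword_def])

lemma hweight_codeword: "hweight (codeword f) = card {j \<in> {1..n}. coord0 (monom 1 j * f) \<noteq> 0}"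
proof -
  let ?J = "{j \<in> {1..n}. coord0 (monom 1 j * f) \<noteq> 0}"
  have high: "coeff (codeword f) i = 0" if "i \<ge> n" for i
    using degree_codeword[of f] that by (intro coeff_eq_0) linarith
  have "{i. coeff (codeword f) i \<noteq> 0} = (\<lambda>j. n - j) ` ?J"
  proof (intro set_eqI iffI)
    fix i assume "i \<in> {i. coeff (codeword f) i \<noteq> 0}"
    hence "i < n" "coeff (codeword f) i \<noteq> 0" using high not_le by auto
    thus "i \<in> (\<lambda>j. n - j) ` ?J"
      by (intro image_eqI[of _ _ "n - i"]) (auto simp: coeff_codeword)
  next
    fix i assume "i \<in> (\<lambda>j. n - j) ` ?J"
    thus "i \<in> {i. coeff (codeword f) i \<noteq> 0}" by (auto simp: coeff_codeword)
  qed
  moreover have "inj_on (\<lambda>j. n - j) ?J" by (rule inj_onI) auto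
  ultimately show ?thesis unfolding hweight_def by (simp add: card_image)
qed

text \<open>The nonzero residues modulo \<open>h\<close>: each nonzero codeword comes from exactly one.\<close>
definition residues :: "'a poly set" where
  "residues = {u. u \<noteq> 0 \<and> degree u < degree h}"

lemma finite_residues: "finite residues"
  unfolding residues_def using finite_degree_less by (rule rev_finite_subset) auto

lemma card_residues: "card residues = card (UNIV::'a set) ^ degree h - 1"
proof -
  have "{u. degree u < degree h} = insert 0 residues"
    unfolding residues_def using degree_gt_1 by auto
  hence "card {u :: 'a poly. degree u < degree h} = Suc (card residues)"
    using finite_residues by (simp add: residues_def)
  thus ?thesis using card_degree_less[of "degree h", where 'a='a] degree_gt_1 by simp
qed

lemma residue_not_dvd: "u \<in> residues \<Longrightarrow> \<not> h dvd u"
  unfolding residues_def using dvd_imp_degree_le[of h u] by auto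

lemma residue_mod: "u \<in> residues \<Longrightarrow> u mod h = u"
  unfolding residues_def by (simp add: mod_poly_less)

lemma mod_in_residues: "\<not> h dvd f \<Longrightarrow> f mod h \<in> residues"
  unfolding residues_def using degree_mod_less[OF h_nonzero, of f] by (auto simp: dvd_eq_mod_eq_0)

lemma nonzero_codewords: "{z \<in> cyc_code n h. z \<noteq> 0} = codeword ` residues"
proof (intro set_eqI iffI)
  fix z assume "z \<in> {z \<in> cyc_code n h. z \<noteq> 0}"
  then obtain f where z: "z = codeword f" "\<not> h dvd f"
    unfolding cyc_code_eq by (auto simp: codeword_eq_0_iff)
  hence "z = codeword (f mod h)" "f mod h \<in> residues"
    using mod_in_residues by (auto simp: codeword_mod)
  thus "z \<in> codeword ` residues" by blast
next
  fix z assume "z \<in> codeword ` residues"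
  thus "z \<in> {z \<in> cyc_code n h. z \<noteq> 0}"
    unfolding cyc_code_eq using residue_not_dvd codeword_eq_0_iff by auto
qed

lemma card_nonzero_codewords:
  "card {z \<in> cyc_code n h. z \<noteq> 0} = card (UNIV::'a set) ^ degree h - 1"
proof -
  have "inj_on codeword residues"
    by (rule inj_onI) (metis codeword_eq_iff residue_mod)
  thus ?thesis unfolding nonzero_codewords card_residues[symmetric] by (rule card_image)
qed

lemma cyc_codeword: "cyc n (codeword f) = range (\<lambda>i. codeword (monom 1 i * f))"
  unfolding cyc_def codeword_shift by auto

lemma cyc_codeword_lessThan: "cyc n (codeword f) = (\<lambda>i. codeword (monom 1 i * f)) ` {..<n}"
proof -
  have "codeword (monom 1 i * f) = codeword (monom 1 (i mod n) * f)" for i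
    by (rule codeword_shift_cong) simp
  moreover have "i mod n < n" for i using n_pos by simp
  ultimately show ?thesis unfolding cyc_codeword by blast
qed

lemma card_cyc:
  assumes "\<not> h dvd f"
  shows "card (cyc n (codeword f)) = n"
proof -
  have "inj_on (\<lambda>i. codeword (monom 1 i * f)) {..<n}"
  proof (rule inj_onI)
    fix i j assume "i \<in> {..<n}" "j \<in> {..<n}"
      and "codeword (monom 1 i * f) = codeword (monom 1 j * f)"
    thus "i = j"
      by (simp add: codeword_eq_iff shift_mod_eq_iff[OF assms] cong_less_imp_eq_nat)
  qed
  thus ?thesis unfolding cyc_codeword_lessThan by (simp add: card_image)
qed

text \<open>Since \<open>x^n\<close> acts as the identity, a cycle is the cycle of each of its members;
  hence distinct cycles are disjoint.\<close>
lemma cyc_of_member: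
  assumes "z \<in> cyc n (codeword f)"
  shows "cyc n z = cyc n (codeword f)"
proof -
  obtain i where z: "z = codeword (monom 1 i * f)"
    using assms unfolding cyc_codeword by blast
  have "codeword (monom 1 k * f) = codeword (monom 1 (k + (n - 1) * i) * (monom 1 i * f))" for k
  proof -
    have "k + (n - 1) * i + i = k + i * n"
      using n_pos by (cases n) auto
    hence "[k + (n - 1) * i + i = k] (mod n)"
      by (simp only: cong_def mod_mult_self1)
    hence "codeword (monom 1 (k + (n - 1) * i + i) * f) = codeword (monom 1 k * f)"
      by (rule codeword_shift_cong)
    thus ?thesis by (simp add: mult_monom flip: mult.assoc)
  qed
  hence "cyc n (codeword f) \<subseteq> cyc n z"
    unfolding z cyc_codeword by blast
  moreover have "cyc n z \<subseteq> cyc n (codeword f)"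
    unfolding z cyc_codeword by (auto simp: mult_monom simp flip: mult.assoc)
  ultimately show ?thesis by blast
qed

text \<open>The nonzero codewords are partitioned into \<open>s\<close> cycles of length \<open>n\<close>, so
  \<open>n \<cdot> s = q^m - 1\<close>.\<close>
lemma n_mult_num_cycles: "n * num_cycles n h = card (UNIV::'a set) ^ degree h - 1"
proof -
  let ?K = "{z \<in> cyc_code n h. z \<noteq> 0}"
  let ?C = "{cyc n z | z. z \<in> cyc_code n h \<and> z \<noteq> 0}"
  have C: "?C = cyc n ` codeword ` residues"
    unfolding nonzero_codewords[symmetric] by blast
  have "cyc n (codeword u) \<subseteq> ?K" if "u \<in> residues" for u
    using residue_not_dvd[OF that] not_dvd_mult[OF not_dvd_monom]
    unfolding cyc_codeword cyc_code_eq by (auto simp: codeword_eq_0_iff)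
  moreover have "codeword u \<in> cyc n (codeword u)" for u
    unfolding cyc_codeword by (rule range_eqI[of _ _ 0]) simp
  ultimately have union: "\<Union>?C = ?K"
    unfolding C nonzero_codewords by blast
  have "n * card ?C = card (\<Union>?C)"
  proof (rule card_partition)
    show "finite ?C" unfolding C using finite_residues by simp
    show "finite (\<Union>?C)" unfolding union nonzero_codewords using finite_residues by simp
    show "card c = n" if "c \<in> ?C" for c
      using that card_cyc residue_not_dvd unfolding C by blast
    show "c1 \<inter> c2 = {}" if cs: "c1 \<in> ?C" "c2 \<in> ?C" "c1 \<noteq> c2" for c1 c2
    proof (rule ccontr)
      obtain u1 u2 where c: "c1 = cyc n (codeword u1)" "c2 = cyc n (codeword u2)"
        using cs(1,2) unfolding C by blast
      assume "c1 \<inter> c2 \<noteq> {}"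
      then obtain z where "z \<in> c1" "z \<in> c2" by blast
      hence "c1 = c2" unfolding c using cyc_of_member by metis
      thus False using cs(3) by contradiction
    qed
  qed
  thus ?thesis
    unfolding num_cycles_def union card_nonzero_codewords .
qed

text \<open>The map \<open>(c, j) \<mapsto> c x^j f mod h\<close> on \<open>GF(q)^* \<times> {1..n}\<close>; the weight of the
  codeword of \<open>f\<close> is read off from it.\<close>
definition scaled_shift :: "'a poly \<Rightarrow> 'a \<times> nat \<Rightarrow> 'a poly" where
  "scaled_shift f p = smult (fst p) (monom 1 (snd p) * f) mod h"

lemma scaled_shift_in_residues:
  assumes "\<not> h dvd f" "c \<noteq> 0"
  shows "scaled_shift f (c, j) \<in> residues"
proof -
  have "\<not> h dvd smult c (monom 1 j * f)"
    using dvd_smult_cancel[OF _ assms(2)] not_dvd_mult[OF not_dvd_monom assms(1)] by blast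
  thus ?thesis unfolding scaled_shift_def by (simp add: mod_in_residues)
qed

text \<open>Raising to the power \<open>q - 1\<close> kills the scalars: if two scaled shifts of \<open>f\<close>
  coincide, their exponents agree after multiplication by \<open>q - 1\<close>, modulo \<open>n\<close>.\<close>
lemma scaled_shift_cong:
  assumes f: "\<not> h dvd f" and c: "c \<noteq> 0" "c' \<noteq> 0"
    and eq: "scaled_shift f (c, j) = scaled_shift f (c', j')"
  shows "[j * (card (UNIV::'a set) - 1) = j' * (card (UNIV::'a set) - 1)] (mod n)"
proof -
  let ?k = "card (UNIV::'a set) - 1"
  have pow: "(smult a (monom 1 i * f)) ^ ?k = monom 1 (i * ?k) * f ^ ?k" if "a \<noteq> 0" for a i
    using power_card_minus_one[OF that]
    by (simp add: smult_power power_mult_distrib monom_power)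
  have "(smult c (monom 1 j * f)) ^ ?k mod h = (smult c (monom 1 j * f) mod h) ^ ?k mod h"
    by (rule power_mod[symmetric])
  also have "\<dots> = (smult c' (monom 1 j' * f) mod h) ^ ?k mod h"
    using eq unfolding scaled_shift_def by simp
  also have "\<dots> = (smult c' (monom 1 j' * f)) ^ ?k mod h"
    by (rule power_mod)
  finally have "(smult c (monom 1 j * f)) ^ ?k mod h = (smult c' (monom 1 j' * f)) ^ ?k mod h" .
  hence "(monom 1 (j * ?k) * f ^ ?k) mod h = (monom 1 (j' * ?k) * f ^ ?k) mod h"
    by (simp only: pow[OF c(1)] pow[OF c(2)])
  moreover have "\<not> h dvd f ^ ?k"
    using f prime prime_elem_dvd_power by blast
  ultimately show ?thesis by (simp add: shift_mod_eq_iff)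
qed

text \<open>Each fiber of the scaled-shift map has at most \<open>d = gcd(q - 1, n)\<close> elements:
  the scalar is determined by the exponent, and the exponents of a fiber are pairwise
  congruent modulo \<open>n/d\<close>.\<close>
lemma scaled_shift_fiber_le:
  assumes f: "\<not> h dvd f"
  shows "card {p \<in> (UNIV - {0}) \<times> {1..n}. scaled_shift f p = u} \<le> gcd (card (UNIV::'a set) - 1) n"
    (is "card ?F \<le> ?d")
proof -
  have "inj_on snd ?F"
  proof (rule inj_onI)
    fix p p' assume p: "p \<in> ?F" "p' \<in> ?F" "snd p = snd p'"
    let ?X = "monom 1 (snd p) * f"
    have "smult (fst p) ?X mod h = smult (fst p') ?X mod h"
      using p unfolding scaled_shift_def by simp
    hence "h dvd smult (fst p) ?X - smult (fst p') ?X"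
      by (simp only: mod_eq_dvd_iff)
    hence "h dvd smult (fst p - fst p') ?X"
      by (simp add: smult_diff_left)
    moreover have "\<not> h dvd ?X" by (rule not_dvd_mult[OF not_dvd_monom f])
    ultimately have "fst p - fst p' = 0"
      using dvd_smult_cancel by blast
    hence "fst p = fst p'" by simp
    thus "p = p'" using p(3) by (simp add: prod_eq_iff)
  qed
  moreover have "card (snd ` ?F) \<le> ?d"
  proof (rule card_congruent_le)
    show "snd ` ?F \<subseteq> {1..<1 + n div ?d * ?d}" by auto
    fix j j' assume "j \<in> snd ` ?F" "j' \<in> snd ` ?F"
    then obtain p p' where p: "p \<in> ?F" "p' \<in> ?F" "j = snd p" "j' = snd p'"
      by blast
    hence "fst p \<noteq> 0" "fst p' \<noteq> 0" "scaled_shift f (fst p, j) = scaled_shift f (fst p', j')"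
      by auto
    hence "[j * (card (UNIV::'a set) - 1) = j' * (card (UNIV::'a set) - 1)] (mod n)"
      by (rule scaled_shift_cong[OF f])
    thus "[j = j'] (mod n div ?d)"
      using cong_cancel_gcd n_pos by simp
  qed
  ultimately show ?thesis by (simp add: card_image)
qed

text \<open>If \<open>n (q - 1) = d (q^m - 1)\<close>, counting the pairs \<open>(c, j)\<close> shows that every fiber
  has exactly \<open>d\<close> elements; counting those landing where \<open>coord0\<close> does not vanish gives
  a weight formula independent of \<open>f\<close>.\<close>
lemma weight_formula:
  assumes f: "\<not> h dvd f"
    and balanced: "n * (card (UNIV::'a set) - 1) = gcd (card (UNIV::'a set) - 1) n * (card (UNIV::'a set) ^ degree h - 1)"
  shows "(card (UNIV::'a set) - 1) * hweight (codeword f)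
       = gcd (card (UNIV::'a set) - 1) n * card {u \<in> residues. coord0 u \<noteq> 0}"
proof -
  let ?d = "gcd (card (UNIV::'a set) - 1) n"
  let ?P = "(UNIV - {0::'a}) \<times> {1..n}"
  have maps: "scaled_shift f ` ?P \<subseteq> residues"
    using scaled_shift_in_residues[OF f] by auto
  have "card ?P = ?d * card residues"
    using balanced by (simp add: card_cartesian_product card_Diff_singleton card_residues mult.commute)
  hence full: "card {p \<in> ?P. scaled_shift f p = u} = ?d" if "u \<in> residues" for u
    using fibers_full[OF _ maps finite_residues scaled_shift_fiber_le[OF f]] that by simp
  have "card {p \<in> ?P. scaled_shift f p \<in> {u \<in> residues. coord0 u \<noteq> 0}}
      = ?d * card {u \<in> residues. coord0 u \<noteq> 0}"
    by (rule card_preimage_full_fibers) (use full finite_residues in auto)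
  moreover have "{p \<in> ?P. scaled_shift f p \<in> {u \<in> residues. coord0 u \<noteq> 0}}
      = (UNIV - {0}) \<times> {j \<in> {1..n}. coord0 (monom 1 j * f) \<noteq> 0}"
    using scaled_shift_in_residues[OF f]
    by (auto simp: scaled_shift_def coord0_mod coord0_smult)
  ultimately show ?thesis
    by (simp add: hweight_codeword card_cartesian_product card_Diff_singleton)
qed

end

theorem corollary5:
  fixes h :: "'a::{field,finite} poly" and q n m d r R b s :: nat
  assumes "q = card (UNIV :: 'a set)" and "q > 2"
    and "lead_coeff h = 1" and "irreducible h"
    and "m = degree h" and "m > 1"
    and "n = poly_ord h" and "n \<noteq> q ^ m - 1"
    and "d = gcd (q - 1) n" and "r = n div d"
    and "R = (q ^ m - 1) div (q - 1)" and "b = (q - 1) div d"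
    and "s = num_cycles n h"
  shows "(s = b \<longrightarrow> (\<forall>c1\<in>cyc_code n h. \<forall>c2\<in>cyc_code n h.
              c1 \<noteq> 0 \<longrightarrow> c2 \<noteq> 0 \<longrightarrow> hweight c1 = hweight c2))
         \<and> (s = b \<longleftrightarrow> r = R) \<and> (r = R \<longleftrightarrow> gcd s R = 1)"
proof -
  interpret irreducible_of_order h n
    using assms(4-7) by unfold_locales auto
  have ns: "n * s = q ^ m - 1"
    using n_mult_num_cycles unfolding assms(1,5,13) .
  also have "\<dots> = R * (q - 1)"
    unfolding assms(11) using pred_dvd_power_pred[of q m] assms(2) by simp
  finally have "n * s = R * (q - 1)" .
  hence arith: "(s = b \<longleftrightarrow> r = R) \<and> (r = R \<longleftrightarrow> gcd s R = 1)"
    unfolding assms(9,10,12) using cycle_count_arith[of n s R "q - 1"] n_pos assms(2)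
    by (simp add: gcd.commute)
  have "hweight c1 = hweight c2"
    if "s = b" and c: "c1 \<in> cyc_code n h" "c2 \<in> cyc_code n h" "c1 \<noteq> 0" "c2 \<noteq> 0" for c1 c2
  proof -
    have "q - 1 = d * s" unfolding \<open>s = b\<close> assms(9,12) by simp
    hence "n * (q - 1) = d * (q ^ m - 1)" unfolding ns[symmetric] by simp
    hence balanced: "n * (card (UNIV::'a set) - 1)
        = gcd (card (UNIV::'a set) - 1) n * (card (UNIV::'a set) ^ degree h - 1)"
      unfolding assms(1,5,9) .
    obtain f1 f2 where "c1 = codeword f1" "c2 = codeword f2" "\<not> h dvd f1" "\<not> h dvd f2"
      using c unfolding cyc_code_eq by (auto simp: codeword_eq_0_iff)
    hence "(q - 1) * hweight c1 = (q - 1) * hweight c2"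
      using weight_formula[OF _ balanced] unfolding assms(1) by simp
    thus ?thesis using assms(2) by simp
  qed
  thus ?thesis using arith by blast
qed

end
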